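(* For every integer $m\ge0$ and every integer $l\ge 2m+3$, \[ \mu_l^{(m+1,m+2)}=2P_{l-2m-3}^{\{-2,m-1,m\}} . \]
   Context: An $n$-board is the strip $[0,n]\times[0,1]$ divided into unit cells, each split into a left and a right half (slot). A $(w,g;t)$-comb is a tile consisting of a row of $t$ rectangles (teeth) of size $w\times1$, consecutive teeth separated by a gap of width $g$; gaps are not part of the tile and may be occupied by other tiles. A tiling is a placement of translated (unrotated) combs whose teeth cover the board exactly without overlap. Given a tiling of an $n$-board, an integer $x$ with $0<x<n$ is a cut point if every comb has all of its teeth in $[0,x]$ or all in $[x,n]$. A metatile of length $l$ is a tiling of an $l$-board with no cut point. A metatile is mixed if it contains combs of more than one type. For integers $1\le m_1<m_2$, $\mu_l^{(m_1,m_2)}$ is the number of mixed metatiles of length $l$ when tiling with $(\frac12,\frac12;m_1)$- and $(\frac12,\frac12;m_2)$-combs. For a finite set $W$ of integers, $P_n^W$ is the number of permutations $\pi$ of $\{1,\dots,n\}$ with $\pi(i)-i\in W$ for all $i$ (equivalently, the permanent of the $n\times n$ $(0,1)$ matrix whose $(i,j)$ entry is $1$ iff $j-i\in W$), with $P_0^W=1$. *)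

theory Defs
  imports "HOL-Combinatorics.Permutations"
begin

text \<open>Discretisation: the n-board [0,n] x [0,1] has 2n half-cell slots, slot k
  being [k/2,(k+1)/2]. A placed (1/2,1/2;t)-comb is a pair (s,t): its teeth occupy
  the slots s, s+2, ..., s+2(t-1). (Since teeth have width 1/2 and must tile [0,n]
  exactly, every translation in a tiling is a multiple of 1/2.)\<close>

definition comb_slots :: "nat \<times> nat \<Rightarrow> nat set" where
  "comb_slots c = {fst c + 2 * i | i. i < snd c}"

definition is_tiling :: "nat \<Rightarrow> nat \<Rightarrow> nat \<Rightarrow> (nat \<times> nat) set \<Rightarrow> bool" where
  "is_tiling m1 m2 n T \<longleftrightarrow>
     finite T \<and> (\<forall>c\<in>T. snd c \<in> {m1, m2}) \<and>
     (\<Union>c\<in>T. comb_slots c) = {..<2 * n} \<and>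
     (\<forall>c\<in>T. \<forall>d\<in>T. c \<noteq> d \<longrightarrow> comb_slots c \<inter> comb_slots d = {})"

definition is_cut_point :: "nat \<Rightarrow> (nat \<times> nat) set \<Rightarrow> nat \<Rightarrow> bool" where
  "is_cut_point n T x \<longleftrightarrow> 0 < x \<and> x < n \<and>
     (\<forall>c\<in>T. comb_slots c \<subseteq> {..<2 * x} \<or> comb_slots c \<subseteq> {2 * x..})"

definition is_metatile :: "nat \<Rightarrow> nat \<Rightarrow> nat \<Rightarrow> (nat \<times> nat) set \<Rightarrow> bool" where
  "is_metatile m1 m2 l T \<longleftrightarrow> is_tiling m1 m2 l T \<and> (\<forall>x. \<not> is_cut_point l T x)"

definition is_mixed :: "(nat \<times> nat) set \<Rightarrow> bool" where
  "is_mixed T \<longleftrightarrow> (\<exists>c\<in>T. \<exists>d\<in>T. snd c \<noteq> snd d)"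

definition mu :: "nat \<Rightarrow> nat \<Rightarrow> nat \<Rightarrow> nat" where
  "mu m1 m2 l = card {T. is_metatile m1 m2 l T \<and> is_mixed T}"

definition P :: "nat \<Rightarrow> int set \<Rightarrow> nat" where
  "P n W = card {p. p permutes {1..n} \<and> (\<forall>i\<in>{1..n}. int (p i) - int i \<in> W)}"

end

theory Submission
  imports Defs
begin

text \<open>The teeth of a (1/2,1/2;t)-comb occupy every other half-cell slot, so each comb lies in one
  of the two rows of slots of fixed parity, and a tiling by (m+1)- and (m+2)-combs is the same as a
  pair of compositions of l into parts a = m + 1 and a + 1, recorded by their sets of breaks
  (partial sums). Cut points are the common interior breaks, and for l \<ge> 2a + 1 a tiling
  without cut point is automatically mixed, because the first combs of the two rows must differ.
  Without common breaks the breaks of the two rows alternate, so the pair is determined by the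
  merged set Z of interior breaks together with the row containing the second break; in Z the
  second successor of every point lies a or a + 1 further on. Translated into {1..n + 2} with
  n = l - 2m - 3, these sets correspond to the permutations of {1..n} with displacements in
  {-2, m - 1, m}: a point of Z goes to its second successor minus 2, every other point moves two
  steps back.\<close>

section \<open>Ranks and alternating break sets\<close>

definition rank_in :: "nat set \<Rightarrow> nat \<Rightarrow> nat" where
  "rank_in Z z = card {w\<in>Z. w \<le> z}"

lemma rank_in_split:
  assumes "finite Z" "x \<le> y"
  shows "rank_in Z y = rank_in Z x + card {w\<in>Z. x < w \<and> w \<le> y}"
proof -
  have "{w\<in>Z. w \<le> y} = {w\<in>Z. w \<le> x} \<union> {w\<in>Z. x < w \<and> w \<le> y}" using assms(2) by auto
  moreover have "{w\<in>Z. w \<le> x} \<inter> {w\<in>Z. x < w \<and> w \<le> y} = {}" by auto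
  ultimately show ?thesis unfolding rank_in_def using assms(1) by (simp add: card_Un_disjoint)
qed

lemma rank_in_less:
  assumes "finite Z" "y \<in> Z" "x < y"
  shows "rank_in Z x < rank_in Z y"
proof -
  have "y \<in> {w\<in>Z. x < w \<and> w \<le> y}" using assms(2,3) by simp
  then have "card {w\<in>Z. x < w \<and> w \<le> y} > 0" using assms(1) by (auto simp: card_gt_0_iff)
  then show ?thesis using rank_in_split[OF assms(1), of x y] assms(3) by simp
qed

lemma rank_in_inj:
  assumes "finite Z" "x \<in> Z" "y \<in> Z" "rank_in Z x = rank_in Z y"
  shows "x = y"
  using rank_in_less[OF assms(1)] assms(2-4) by (metis nat_neq_iff)

lemma rank_in_between:
  assumes "finite Z" "v \<in> Z" "y \<in> Z" "x < v" "v < y" "rank_in Z y = rank_in Z x + 2"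
  shows "rank_in Z v = rank_in Z x + 1"
  using rank_in_less[OF assms(1,2,4)] rank_in_less[OF assms(1,3,5)] assms(6) by simp

definition second_succ :: "nat set \<Rightarrow> nat \<Rightarrow> nat" where
  "second_succ Z x = (THE y. y \<in> Z \<and> rank_in Z y = rank_in Z x + 2)"

lemma second_succ_eq:
  assumes "finite Z" "y \<in> Z" "rank_in Z y = rank_in Z x + 2"
  shows "second_succ Z x = y"
  unfolding second_succ_def using assms rank_in_inj[OF assms(1)] by (intro the_equality) auto

text \<open>The merged interior breaks of two compositions with parts a and a + 1 whose breaks
  alternate, translated so that the first break is lo: each break is followed by the next break
  of the same composition two places later.\<close>
definition alternating_breaks :: "nat \<Rightarrow> nat \<Rightarrow> nat \<Rightarrow> nat set \<Rightarrow> bool" where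
  "alternating_breaks a lo hi Z \<longleftrightarrow> Z \<subseteq> {lo..hi} \<and> lo \<in> Z \<and> lo + 1 \<in> Z \<and> hi - 1 \<in> Z \<and> hi \<in> Z \<and>
     (\<forall>x\<in>Z. x < hi - 1 \<longrightarrow>
        (\<exists>y\<in>Z. (y = x + a \<or> y = x + a + 1) \<and> rank_in Z y = rank_in Z x + 2))"

lemma alternating_breaks_finite: "alternating_breaks a lo hi Z \<Longrightarrow> finite Z"
  unfolding alternating_breaks_def by (meson finite_atLeastAtMost finite_subset)

lemma alternating_breaks_bounds:
  assumes "alternating_breaks a lo hi Z"
  shows "Z \<subseteq> {lo..hi}" "lo \<in> Z" "lo + 1 \<in> Z" "hi - 1 \<in> Z" "hi \<in> Z"
  using assms unfolding alternating_breaks_def by simp_all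

lemma alternating_breaks_first_ranks:
  assumes Z: "alternating_breaks a lo hi Z"
  shows "rank_in Z lo = 1" "rank_in Z (lo + 1) = 2"
proof -
  have "{w\<in>Z. w \<le> lo} = {lo}" "{w\<in>Z. w \<le> lo + 1} = {lo, lo + 1}"
    using alternating_breaks_bounds[OF Z] by auto
  then show "rank_in Z lo = 1" "rank_in Z (lo + 1) = 2" unfolding rank_in_def by simp_all
qed

lemma alternating_breaks_second_succ:
  assumes Z: "alternating_breaks a lo hi Z" and x: "x \<in> Z" "x < hi - 1"
  shows "second_succ Z x \<in> Z" "second_succ Z x = x + a \<or> second_succ Z x = x + a + 1"
    "rank_in Z (second_succ Z x) = rank_in Z x + 2"
proof -
  obtain y where "y \<in> Z" "y = x + a \<or> y = x + a + 1" "rank_in Z y = rank_in Z x + 2"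
    using Z x unfolding alternating_breaks_def by blast
  moreover then have "second_succ Z x = y"
    using second_succ_eq alternating_breaks_finite[OF Z] by blast
  ultimately show "second_succ Z x \<in> Z" "second_succ Z x = x + a \<or> second_succ Z x = x + a + 1"
    "rank_in Z (second_succ Z x) = rank_in Z x + 2" by simp_all
qed

lemma rank_in_shift: "rank_in ((+) k ` Z) (k + x) = rank_in Z x"
proof -
  have "{w\<in>(+) k ` Z. w \<le> k + x} = (+) k ` {w\<in>Z. w \<le> x}" by auto
  then show ?thesis unfolding rank_in_def by (simp add: card_image)
qed

lemma alternating_breaks_shift_iff:
  assumes "1 \<le> hi"
  shows "alternating_breaks a (k + lo) (k + hi) ((+) k ` Z) \<longleftrightarrow> alternating_breaks a lo hi Z"
proof -
  have hi: "k + hi - 1 = k + (hi - 1)" using assms by simp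
  have mem: "k + u \<in> (+) k ` Z \<longleftrightarrow> u \<in> Z" for u by auto
  have step: "(\<forall>x\<in>(+) k ` Z. x < k + (hi - 1) \<longrightarrow> (\<exists>y\<in>(+) k ` Z. (y = x + a \<or> y = x + a + 1) \<and>
      rank_in ((+) k ` Z) y = rank_in ((+) k ` Z) x + 2)) \<longleftrightarrow>
    (\<forall>x\<in>Z. x < hi - 1 \<longrightarrow> (\<exists>y\<in>Z. (y = x + a \<or> y = x + a + 1) \<and> rank_in Z y = rank_in Z x + 2))"
    by (simp add: rank_in_shift add.assoc)
  show ?thesis
    unfolding alternating_breaks_def hi step
    using mem[of lo] mem[of "lo + 1"] mem[of "hi - 1"] mem[of hi]
    by (auto simp: add.assoc)
qed

lemma card_alternating_breaks_shift:
  assumes "1 \<le> hi"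
  shows "card {Z. alternating_breaks a (k + lo) (k + hi) Z} = card {Z. alternating_breaks a lo hi Z}"
proof -
  have "{Z. alternating_breaks a (k + lo) (k + hi) Z} = (`) ((+) k) ` {Z. alternating_breaks a lo hi Z}"
  proof (intro equalityI subsetI)
    fix Z assume Z: "Z \<in> {Z. alternating_breaks a (k + lo) (k + hi) Z}"
    define Z' where "Z' = (\<lambda>z. z - k) ` Z"
    have "\<forall>z\<in>Z. k + (z - k) = z" using Z unfolding alternating_breaks_def by auto
    then have Z': "(+) k ` Z' = Z" unfolding Z'_def by (simp add: image_image)
    then have "alternating_breaks a lo hi Z'"
      using Z alternating_breaks_shift_iff[OF assms, of a k lo Z'] by simp
    then show "Z \<in> (`) ((+) k) ` {Z. alternating_breaks a lo hi Z}" using Z' by blast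
  qed (use alternating_breaks_shift_iff[OF assms] in auto)
  moreover have "inj ((`) ((+) k))"
    by (intro inj_onI) (simp add: inj_image_eq_iff)
  ultimately show ?thesis using card_image[OF inj_on_subset] by (metis subset_UNIV)
qed

section \<open>Alternating break sets and permutations\<close>

definition perm_of_breaks :: "nat \<Rightarrow> nat set \<Rightarrow> nat \<Rightarrow> nat" where
  "perm_of_breaks n Z i = (if i \<in> {1..n} then (if i \<in> Z then second_succ Z i else i) - 2 else i)"

definition breaks_of_perm :: "nat \<Rightarrow> (nat \<Rightarrow> nat) \<Rightarrow> nat set" where
  "breaks_of_perm n p = {i\<in>{1..n}. p i + 2 \<noteq> i} \<union> {n + 1, n + 2}"

lemma finite_breaks_of_perm: "finite (breaks_of_perm n p)"
  unfolding breaks_of_perm_def by simp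

context
  fixes m n :: nat and Z :: "nat set"
  assumes Z: "alternating_breaks (m + 1) 1 (n + 2) Z"
begin

lemma breaks_bounds: "Z \<subseteq> {1..n + 2}" "1 \<in> Z" "2 \<in> Z" "n + 1 \<in> Z" "n + 2 \<in> Z"
  using alternating_breaks_bounds[OF Z] by (simp_all add: numeral_2_eq_2)

lemma non_break_ge_3: "i \<notin> Z \<Longrightarrow> 1 \<le> i \<Longrightarrow> 3 \<le> i"
  using breaks_bounds(2,3) by (cases "i = 1 \<or> i = 2") auto

lemma second_succ_of_break:
  assumes i: "i \<in> Z" "i \<le> n"
  shows "second_succ Z i \<in> Z" "second_succ Z i = i + m + 1 \<or> second_succ Z i = i + m + 2"
    "rank_in Z (second_succ Z i) = rank_in Z i + 2" "3 \<le> second_succ Z i"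
proof -
  show s: "second_succ Z i \<in> Z" "second_succ Z i = i + m + 1 \<or> second_succ Z i = i + m + 2"
    "rank_in Z (second_succ Z i) = rank_in Z i + 2"
    using alternating_breaks_second_succ[OF Z i(1)] i(2) by auto
  have "i \<in> {w\<in>Z. w \<le> i}" using i(1) by simp
  then have "1 \<le> rank_in Z i"
    using alternating_breaks_finite[OF Z] unfolding rank_in_def by (auto simp: Suc_le_eq card_gt_0_iff)
  moreover have "rank_in Z (second_succ Z i) \<le> second_succ Z i"
  proof -
    have "{w\<in>Z. w \<le> second_succ Z i} \<subseteq> {1..second_succ Z i}" using breaks_bounds(1) by auto
    then show ?thesis unfolding rank_in_def by (metis card_atLeastAtMost card_mono diff_Suc_1 finite_atLeastAtMost)
  qed
  ultimately show "3 \<le> second_succ Z i" using s(3) by linarith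
qed

lemma perm_of_breaks_permutes: "perm_of_breaks n Z permutes {1..n}"
proof -
  define \<sigma> where "\<sigma> i = (if i \<in> Z then second_succ Z i else i)" for i
  have p: "perm_of_breaks n Z i = \<sigma> i - 2" if "i \<in> {1..n}" for i
    using that unfolding perm_of_breaks_def \<sigma>_def by simp
  have \<sigma>_range: "\<sigma> i \<in> {3..n + 2}" if "i \<in> {1..n}" for i
  proof (cases "i \<in> Z")
    case True
    then show ?thesis using that second_succ_of_break[OF True] breaks_bounds(1) unfolding \<sigma>_def by auto
  next
    case False
    then show ?thesis using non_break_ge_3[OF False] that unfolding \<sigma>_def by auto
  qed
  have \<sigma>_mem: "\<sigma> i \<in> Z \<longleftrightarrow> i \<in> Z" if "i \<in> {1..n}" for i
    using that second_succ_of_break(1) unfolding \<sigma>_def by auto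
  have \<sigma>_inj: "i = j" if ij: "i \<in> {1..n}" "j \<in> {1..n}" "\<sigma> i = \<sigma> j" for i j
  proof (cases "i \<in> Z")
    case True
    then have "j \<in> Z" using ij \<sigma>_mem by metis
    then have "rank_in Z i = rank_in Z j"
      using ij True second_succ_of_break(3) unfolding \<sigma>_def by (metis add_right_cancel atLeastAtMost_iff)
    then show ?thesis using rank_in_inj[OF alternating_breaks_finite[OF Z] True \<open>j \<in> Z\<close>] by simp
  next
    case False
    then show ?thesis using ij \<sigma>_mem unfolding \<sigma>_def by metis
  qed
  have "inj_on (perm_of_breaks n Z) {1..n}"
  proof (rule inj_onI)
    fix i j assume ij: "i \<in> {1..n}" "j \<in> {1..n}" "perm_of_breaks n Z i = perm_of_breaks n Z j"
    then have "\<sigma> i = \<sigma> j" using p \<sigma>_range[OF ij(1)] \<sigma>_range[OF ij(2)] by fastforce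
    then show "i = j" using \<sigma>_inj ij by blast
  qed
  moreover have "perm_of_breaks n Z i \<in> {1..n}" if "i \<in> {1..n}" for i
    using p[OF that] \<sigma>_range[OF that] by auto
  ultimately show ?thesis
    by (intro inj_imp_permutes) (auto simp: perm_of_breaks_def)
qed

lemma perm_of_breaks_displacement:
  assumes "i \<in> {1..n}"
  shows "int (perm_of_breaks n Z i) - int i \<in> {-2, int m - 1, int m}"
  using assms second_succ_of_break[of i] non_break_ge_3[of i] unfolding perm_of_breaks_def
  by (cases "i \<in> Z") auto

lemma breaks_of_perm_of_breaks: "breaks_of_perm n (perm_of_breaks n Z) = Z"
proof -
  have "perm_of_breaks n Z i + 2 \<noteq> i \<longleftrightarrow> i \<in> Z" if "i \<in> {1..n}" for i
    using that second_succ_of_break[of i] non_break_ge_3[of i] unfolding perm_of_breaks_def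
    by (cases "i \<in> Z") auto
  moreover have "Z = (Z \<inter> {1..n}) \<union> {n + 1, n + 2}" using breaks_bounds by fastforce
  ultimately show ?thesis unfolding breaks_of_perm_def by blast
qed

end

context
  fixes m n :: nat and p :: "nat \<Rightarrow> nat"
  assumes perm: "p permutes {1..n}"
    and disp: "\<forall>i\<in>{1..n}. int (p i) - int i \<in> {-2, int m - 1, int m}"
begin

lemma perm_range: "i \<in> {1..n} \<Longrightarrow> p i \<in> {1..n}"
  using permutes_in_image[OF perm] by simp

lemma first_forward_points: "1 \<in> breaks_of_perm n p" "2 \<in> breaks_of_perm n p"
proof -
  have "i \<in> breaks_of_perm n p" if "i \<in> {1, 2}" for i
  proof (cases "i \<le> n")
    case True
    then show ?thesis using that perm_range[of i] unfolding breaks_of_perm_def by auto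
  next
    case False
    then show ?thesis using that unfolding breaks_of_perm_def by auto
  qed
  then show "1 \<in> breaks_of_perm n p" "2 \<in> breaks_of_perm n p" by simp_all
qed

lemma forward_jump:
  assumes "i \<in> breaks_of_perm n p" "i \<le> n"
  shows "p i + 2 = i + m + 1 \<or> p i + 2 = i + m + 2"
proof -
  have "i \<in> {1..n}" "p i + 2 \<noteq> i" using assms unfolding breaks_of_perm_def by auto
  then show ?thesis using disp by force
qed

lemma forward_target:
  assumes i: "i \<in> breaks_of_perm n p" "i \<le> n"
  shows "p i + 2 \<in> breaks_of_perm n p"
proof (cases "p i + 2 \<le> n")
  case True
  have "p i + 2 \<noteq> i" using forward_jump[OF i] by auto
  then have "p (p i + 2) \<noteq> p i" using permutes_inj[OF perm] by (metis injD)
  then show ?thesis using True unfolding breaks_of_perm_def by auto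
next
  case False
  have "p i \<le> n" using perm_range i unfolding breaks_of_perm_def by auto
  then show ?thesis using False unfolding breaks_of_perm_def by auto
qed

lemma forward_mono:
  assumes i: "i \<in> breaks_of_perm n p" "i \<le> n" and j: "j \<in> breaks_of_perm n p" "j \<le> n" and "i < j"
  shows "p i < p j"
proof -
  have "p i \<le> p j" using forward_jump[OF i] forward_jump[OF j] \<open>i < j\<close> by auto
  moreover have "p i \<noteq> p j" using permutes_inj[OF perm] \<open>i < j\<close> by (metis injD less_irrefl)
  ultimately show ?thesis by simp
qed

lemma image_forward_points:
  assumes x: "x \<in> breaks_of_perm n p" "x \<le> n"
  shows "p ` {w\<in>breaks_of_perm n p. w \<le> x} = {v\<in>{1..n}. v + 2 \<in> breaks_of_perm n p \<and> v \<le> p x}"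
proof (intro equalityI subsetI)
  fix v assume "v \<in> p ` {w\<in>breaks_of_perm n p. w \<le> x}"
  then obtain w where w: "w \<in> breaks_of_perm n p" "w \<le> x" "v = p w" by auto
  have "p w \<le> p x"
  proof (cases "w = x")
    case False
    then show ?thesis using forward_mono[OF w(1) _ x] w(2) x(2) by force
  qed simp
  then show "v \<in> {v\<in>{1..n}. v + 2 \<in> breaks_of_perm n p \<and> v \<le> p x}"
    using w x(2) perm_range forward_target[of w] unfolding breaks_of_perm_def by auto
next
  fix v assume v: "v \<in> {v\<in>{1..n}. v + 2 \<in> breaks_of_perm n p \<and> v \<le> p x}"
  then obtain j where j: "j \<in> {1..n}" "p j = v"
    using permutes_image[OF perm] by (metis (no_types, lifting) imageE mem_Collect_eq)
  have jF: "j \<in> breaks_of_perm n p"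
  proof (rule ccontr)
    assume "j \<notin> breaks_of_perm n p"
    then have "v + 2 = j" using j unfolding breaks_of_perm_def by auto
    then show False using v j \<open>j \<notin> breaks_of_perm n p\<close> by simp
  qed
  moreover have "j \<le> x"
  proof (rule ccontr)
    assume "\<not> j \<le> x"
    then have "p x < p j" using forward_mono[OF x jF] j by simp
    then show False using v j by simp
  qed
  ultimately show "v \<in> p ` {w\<in>breaks_of_perm n p. w \<le> x}" using j by auto
qed

text \<open>Since p is increasing on the forward points and maps them onto the points two below a
  break, counting shows that p x + 2 is the second successor of x.\<close>
lemma rank_forward_target:
  assumes x: "x \<in> breaks_of_perm n p" "x \<le> n"
  shows "rank_in (breaks_of_perm n p) (p x + 2) = rank_in (breaks_of_perm n p) x + 2"
proof -
  let ?X = "breaks_of_perm n p"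
  have "p x \<le> n" using perm_range x unfolding breaks_of_perm_def by auto
  then have shift: "(\<lambda>v. v + 2) ` {v\<in>{1..n}. v + 2 \<in> ?X \<and> v \<le> p x} = {u\<in>?X. 2 < u \<and> u \<le> p x + 2}"
  proof (intro equalityI subsetI)
    fix u assume u: "u \<in> {u\<in>?X. 2 < u \<and> u \<le> p x + 2}"
    then obtain v where "u = v + 2" by (metis add.commute less_imp_add_positive mem_Collect_eq)
    then show "u \<in> (\<lambda>v. v + 2) ` {v\<in>{1..n}. v + 2 \<in> ?X \<and> v \<le> p x}"
      using u \<open>p x \<le> n\<close> by auto
  qed auto
  have "rank_in ?X x = card (p ` {w\<in>?X. w \<le> x})"
    unfolding rank_in_def
    using card_image[OF inj_on_subset[OF permutes_inj[OF perm] subset_UNIV]] by simp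
  also have "\<dots> = card {u\<in>?X. 2 < u \<and> u \<le> p x + 2}"
    unfolding image_forward_points[OF x] shift[symmetric] by (rule card_image[symmetric]) (simp add: inj_on_def)
  finally have "rank_in ?X (p x + 2) = rank_in ?X 2 + rank_in ?X x"
    using rank_in_split[OF finite_breaks_of_perm, of 2 "p x + 2"] by simp
  moreover have "{w\<in>?X. w \<le> 2} = {1, 2}" using first_forward_points unfolding breaks_of_perm_def by auto
  ultimately show ?thesis unfolding rank_in_def by simp
qed

lemma alternating_breaks_of_perm: "alternating_breaks (m + 1) 1 (n + 2) (breaks_of_perm n p)"
  unfolding alternating_breaks_def
proof (intro conjI ballI impI)
  show "breaks_of_perm n p \<subseteq> {1..n + 2}" unfolding breaks_of_perm_def by auto
  show "1 \<in> breaks_of_perm n p" "1 + 1 \<in> breaks_of_perm n p"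
    using first_forward_points by (simp_all add: numeral_2_eq_2)
  show "n + 2 - 1 \<in> breaks_of_perm n p" "n + 2 \<in> breaks_of_perm n p"
    unfolding breaks_of_perm_def by auto
  fix x assume x: "x \<in> breaks_of_perm n p" "x < n + 2 - 1"
  then show "\<exists>y\<in>breaks_of_perm n p. (y = x + (m + 1) \<or> y = x + (m + 1) + 1) \<and>
      rank_in (breaks_of_perm n p) y = rank_in (breaks_of_perm n p) x + 2"
    using forward_target[of x] forward_jump[of x] rank_forward_target[of x]
    by (intro bexI[of _ "p x + 2"]) auto
qed

lemma perm_of_breaks_of_perm: "perm_of_breaks n (breaks_of_perm n p) = p"
proof
  fix i
  show "perm_of_breaks n (breaks_of_perm n p) i = p i"
  proof (cases "i \<in> {1..n}")
    case False
    then show ?thesis using permutes_not_in[OF perm False] unfolding perm_of_breaks_def by auto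
  next
    case True
    have "second_succ (breaks_of_perm n p) i = p i + 2" if "i \<in> breaks_of_perm n p"
      using True second_succ_eq[OF finite_breaks_of_perm forward_target rank_forward_target] that
      by simp
    then show ?thesis using True unfolding perm_of_breaks_def breaks_of_perm_def by auto
  qed
qed

end

theorem P_eq_card_alternating_breaks:
  "P n {-2, int m - 1, int m} = card {Z. alternating_breaks (m + 1) 1 (n + 2) Z}"
proof -
  let ?A = "{p. p permutes {1..n} \<and> (\<forall>i\<in>{1..n}. int (p i) - int i \<in> {-2, int m - 1, int m})}"
  have "bij_betw (breaks_of_perm n) ?A {Z. alternating_breaks (m + 1) 1 (n + 2) Z}"
  proof (rule bij_betw_byWitness[where f' = "perm_of_breaks n"])
    show "\<forall>p\<in>?A. perm_of_breaks n (breaks_of_perm n p) = p"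
      using perm_of_breaks_of_perm by blast
    show "breaks_of_perm n ` ?A \<subseteq> {Z. alternating_breaks (m + 1) 1 (n + 2) Z}"
      using alternating_breaks_of_perm by blast
    show "\<forall>Z\<in>{Z. alternating_breaks (m + 1) 1 (n + 2) Z}. breaks_of_perm n (perm_of_breaks n Z) = Z"
      using breaks_of_perm_of_breaks by blast
    show "perm_of_breaks n ` {Z. alternating_breaks (m + 1) 1 (n + 2) Z} \<subseteq> ?A"
      using perm_of_breaks_permutes perm_of_breaks_displacement by blast
  qed
  then show ?thesis unfolding P_def by (rule bij_betw_same_card)
qed

section \<open>Compositions as break sets\<close>

definition is_break_set :: "nat \<Rightarrow> nat \<Rightarrow> nat set \<Rightarrow> bool" where
  "is_break_set a l C \<longleftrightarrow> C \<subseteq> {0..l} \<and> 0 \<in> C \<and> l \<in> C \<and>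
     (\<forall>x\<in>C. x < l \<longrightarrow> (\<forall>y. x < y \<and> y < x + a \<longrightarrow> y \<notin> C) \<and> (x + a \<in> C \<or> x + a + 1 \<in> C))"

definition part_at :: "nat \<Rightarrow> nat set \<Rightarrow> nat \<Rightarrow> nat" where
  "part_at a C x = (if x + a \<in> C then a else a + 1)"

lemma part_at_cases: "part_at a C x = a \<or> part_at a C x = a + 1"
  unfolding part_at_def by simp

context
  fixes a l :: nat and C :: "nat set"
  assumes a: "1 \<le> a" and C: "is_break_set a l C"
begin

lemma break_set_bounds: "C \<subseteq> {0..l}" "0 \<in> C" "l \<in> C"
  using C unfolding is_break_set_def by simp_all

lemma finite_break_set: "finite C"
  using break_set_bounds(1) finite_subset by blast

lemma break_set_next:
  assumes "x \<in> C" "x < l"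
  shows "x + part_at a C x \<in> C" "x < y \<Longrightarrow> y < x + part_at a C x \<Longrightarrow> y \<notin> C"
proof -
  have "(\<forall>y. x < y \<and> y < x + a \<longrightarrow> y \<notin> C) \<and> (x + a \<in> C \<or> x + a + 1 \<in> C)"
    using C assms unfolding is_break_set_def by blast
  then show "x + part_at a C x \<in> C" "x < y \<Longrightarrow> y < x + part_at a C x \<Longrightarrow> y \<notin> C"
    unfolding part_at_def by (auto split: if_splits simp: less_Suc_eq)
qed

lemma break_set_sep:
  assumes "x \<in> C" "y \<in> C" "x < y"
  shows "x + a \<le> y"
proof -
  have "x < l" using assms break_set_bounds(1) by auto
  then show ?thesis
    using assms C unfolding is_break_set_def by (meson not_le)
qed

lemma break_set_interior_bounds:
  assumes "z \<in> C" "0 < z" "z < l"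
  shows "a \<le> z" "z + a \<le> l"
  using break_set_sep[OF break_set_bounds(2) assms(1,2)] break_set_sep[OF assms(1) break_set_bounds(3) assms(3)]
  by simp_all

lemma break_set_cover:
  assumes "y < l"
  shows "\<exists>x\<in>C. x \<le> y \<and> y < x + part_at a C x"
proof -
  define x where "x = Max {x\<in>C. x \<le> y}"
  have "x \<in> {x\<in>C. x \<le> y}"
    unfolding x_def using finite_break_set break_set_bounds(2) by (intro Max_in) auto
  moreover have "\<not> x + part_at a C x \<le> y"
  proof
    assume "x + part_at a C x \<le> y"
    moreover have "x + part_at a C x \<in> C"
      using \<open>x \<in> {x\<in>C. x \<le> y}\<close> assms break_set_next(1) by simp
    ultimately have "x + part_at a C x \<le> x"
      unfolding x_def using finite_break_set by (intro Max_ge) auto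
    then show False using a part_at_cases[of a C x] by auto
  qed
  ultimately show ?thesis by auto
qed

lemma break_set_part_unique:
  assumes x: "x \<in> C" "x \<le> y" "y < x + part_at a C x"
    and x': "x' \<in> C" "x' \<le> y" "y < x' + part_at a C x'"
  shows "x = x'"
proof (rule ccontr)
  have no_break_between: False if "u \<in> C" "v \<in> C" "u < v" "v < u + part_at a C u" for u v
  proof -
    have "u < l" using that(2,3) break_set_bounds(1) by auto
    then show False using break_set_next(2)[OF that(1)] that by blast
  qed
  assume "x \<noteq> x'"
  then consider "x < x'" | "x' < x" by linarith
  then show False
    by cases (use no_break_between[OF x(1) x'(1)] no_break_between[OF x'(1) x(1)] x x' in linarith)+
qed

lemma break_set_pred:
  assumes "z \<in> C" "0 < z"
  shows "\<exists>x\<in>C. x < z \<and> x + part_at a C x = z"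
proof -
  have "z - 1 < l" using assms break_set_bounds(1) by auto
  then obtain x where x: "x \<in> C" "x \<le> z - 1" "z - 1 < x + part_at a C x"
    using break_set_cover by blast
  have "x < l" "x < z" using x \<open>z - 1 < l\<close> assms(2) by linarith+
  then have "\<not> z < x + part_at a C x" using break_set_next(2)[OF x(1)] assms(1) by blast
  then show ?thesis using x \<open>x < z\<close> by (intro bexI[of _ x]) auto
qed

end

section \<open>Tilings as pairs of rows\<close>

text \<open>Slot 2 x + r is half r of cell x. A comb starting at slot s stays in row s mod 2 and
  covers the cells s div 2, ..., s div 2 + t - 1 of that row, so each row of a tiling is a
  composition of l, described by its set of breaks.\<close>
lemma comb_slots_row:
  assumes "r < 2"
  shows "y \<in> comb_slots (2 * x + r, t) \<longleftrightarrow> y mod 2 = r \<and> x \<le> y div 2 \<and> y div 2 < x + t"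
proof
  assume "y \<in> comb_slots (2 * x + r, t)"
  then obtain i where "i < t" "y = 2 * x + r + 2 * i" unfolding comb_slots_def by auto
  then show "y mod 2 = r \<and> x \<le> y div 2 \<and> y div 2 < x + t" using assms by auto
next
  assume y: "y mod 2 = r \<and> x \<le> y div 2 \<and> y div 2 < x + t"
  moreover have "y = 2 * (y div 2) + y mod 2" by simp
  ultimately have "y = 2 * x + r + 2 * (y div 2 - x)" by linarith
  moreover have "y div 2 - x < t" using y by linarith
  ultimately show "y \<in> comb_slots (2 * x + r, t)" unfolding comb_slots_def by auto
qed

lemma comb_slots_iff:
  "y \<in> comb_slots (s, t) \<longleftrightarrow> y mod 2 = s mod 2 \<and> s div 2 \<le> y div 2 \<and> y div 2 < s div 2 + t"
  using comb_slots_row[of "s mod 2" y "s div 2" t] by simp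

lemma comb_slot_at: "s div 2 \<le> z \<Longrightarrow> z < s div 2 + t \<Longrightarrow> 2 * z + s mod 2 \<in> comb_slots (s, t)"
  unfolding comb_slots_iff by simp

definition row_combs :: "nat \<Rightarrow> nat \<Rightarrow> nat set \<Rightarrow> nat \<Rightarrow> (nat \<times> nat) set" where
  "row_combs a l C r = (\<lambda>x. (2 * x + r, part_at a C x)) ` {x\<in>C. x < l}"

definition tiling_of_rows :: "nat \<Rightarrow> nat \<Rightarrow> nat set \<Rightarrow> nat set \<Rightarrow> (nat \<times> nat) set" where
  "tiling_of_rows a l C0 C1 = row_combs a l C0 0 \<union> row_combs a l C1 1"

definition row_breaks :: "nat \<Rightarrow> (nat \<times> nat) set \<Rightarrow> nat \<Rightarrow> nat set" where
  "row_breaks l T r = (\<lambda>c. fst c div 2) ` {c\<in>T. fst c mod 2 = r} \<union> {l}"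

lemma comb_slots_parity: "y \<in> comb_slots (s, t) \<Longrightarrow> y mod 2 = s mod 2"
  unfolding comb_slots_def by auto

lemma row_combs_parity: "(s, t) \<in> row_combs a l C r \<Longrightarrow> r < 2 \<Longrightarrow> s mod 2 = r"
  unfolding row_combs_def by auto

context
  fixes a l :: nat and C :: "nat set" and r :: nat
  assumes a: "1 \<le> a" and C: "is_break_set a l C" and r: "r < 2"
begin

lemma row_combs_slots: "(\<Union>c\<in>row_combs a l C r. comb_slots c) = {y. y < 2 * l \<and> y mod 2 = r}"
proof (intro equalityI subsetI)
  fix y assume "y \<in> (\<Union>c\<in>row_combs a l C r. comb_slots c)"
  then obtain x where x: "x \<in> C" "x < l" "y \<in> comb_slots (2 * x + r, part_at a C x)"
    unfolding row_combs_def by auto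
  then have "x + part_at a C x \<le> l"
    using break_set_next(1)[OF a C x(1,2)] break_set_bounds(1)[OF a C] by auto
  then show "y \<in> {y. y < 2 * l \<and> y mod 2 = r}"
    using x(3) comb_slots_row[OF r] by auto
next
  fix y assume y: "y \<in> {y. y < 2 * l \<and> y mod 2 = r}"
  then have "y div 2 < l" by (simp add: div_less_iff_less_mult mult.commute)
  then obtain x where x: "x \<in> C" "x \<le> y div 2" "y div 2 < x + part_at a C x"
    using break_set_cover[OF a C] by blast
  then have "(2 * x + r, part_at a C x) \<in> row_combs a l C r"
    using y unfolding row_combs_def by auto
  moreover have "y \<in> comb_slots (2 * x + r, part_at a C x)"
    using x y unfolding comb_slots_row[OF r] by simp
  ultimately show "y \<in> (\<Union>c\<in>row_combs a l C r. comb_slots c)" by blast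
qed

lemma row_combs_disjoint:
  assumes c: "c \<in> row_combs a l C r" and d: "d \<in> row_combs a l C r" and "c \<noteq> d"
  shows "comb_slots c \<inter> comb_slots d = {}"
proof (rule ccontr)
  obtain x where x: "x \<in> C" "c = (2 * x + r, part_at a C x)" using c unfolding row_combs_def by auto
  obtain x' where x': "x' \<in> C" "d = (2 * x' + r, part_at a C x')" using d unfolding row_combs_def by auto
  assume "comb_slots c \<inter> comb_slots d \<noteq> {}"
  then obtain y where "y \<in> comb_slots c" "y \<in> comb_slots d" by blast
  then have "x \<le> y div 2" "y div 2 < x + part_at a C x" "x' \<le> y div 2" "y div 2 < x' + part_at a C x'"
    using x(2) x'(2) comb_slots_row[OF r] by simp_all
  then have "x = x'" using break_set_part_unique[OF a C x(1) _ _ x'(1)] by blast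
  then show False using x x' \<open>c \<noteq> d\<close> by simp
qed

lemma row_combs_starts: "(\<lambda>c. fst c div 2) ` row_combs a l C r = {x\<in>C. x < l}"
  unfolding row_combs_def image_image using r by simp

end

context
  fixes a l :: nat and C0 C1 :: "nat set"
  assumes a: "1 \<le> a" and C0: "is_break_set a l C0" and C1: "is_break_set a l C1"
begin

lemma tiling_of_rows_cases:
  assumes "(s, t) \<in> tiling_of_rows a l C0 C1"
  shows "s mod 2 = 0 \<and> (s, t) \<in> row_combs a l C0 0 \<or> s mod 2 = 1 \<and> (s, t) \<in> row_combs a l C1 1"
  using assms row_combs_parity[of s t a l C0 0] row_combs_parity[of s t a l C1 1]
  unfolding tiling_of_rows_def by auto

lemma is_tiling_tiling_of_rows: "is_tiling a (a + 1) l (tiling_of_rows a l C0 C1)"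
  unfolding is_tiling_def
proof (intro conjI ballI impI)
  show "finite (tiling_of_rows a l C0 C1)"
    unfolding tiling_of_rows_def row_combs_def by simp
  show "snd c \<in> {a, a + 1}" if "c \<in> tiling_of_rows a l C0 C1" for c
    using that unfolding tiling_of_rows_def row_combs_def part_at_def by (auto split: if_splits)
  have "(\<Union>c\<in>row_combs a l C0 0. comb_slots c) = {y. y < 2 * l \<and> y mod 2 = 0}"
    "(\<Union>c\<in>row_combs a l C1 1. comb_slots c) = {y. y < 2 * l \<and> y mod 2 = 1}"
    using row_combs_slots[OF a C0, of 0] row_combs_slots[OF a C1, of 1] by simp_all
  then show "(\<Union>c\<in>tiling_of_rows a l C0 C1. comb_slots c) = {..<2 * l}"
    unfolding tiling_of_rows_def UN_Un by auto
  fix c d assume c: "c \<in> tiling_of_rows a l C0 C1" and d: "d \<in> tiling_of_rows a l C0 C1" and "c \<noteq> d"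
  obtain s t s' t' where st: "c = (s, t)" "d = (s', t')" by fastforce
  show "comb_slots c \<inter> comb_slots d = {}"
  proof (cases "s mod 2 = s' mod 2")
    case True
    then have "c \<in> row_combs a l C0 0 \<and> d \<in> row_combs a l C0 0 \<or> c \<in> row_combs a l C1 1 \<and> d \<in> row_combs a l C1 1"
      using tiling_of_rows_cases[of s t] tiling_of_rows_cases[of s' t'] c d st by auto
    then show ?thesis
      using row_combs_disjoint[OF a C0, of 0 c d] row_combs_disjoint[OF a C1, of 1 c d] \<open>c \<noteq> d\<close> by auto
  next
    case False
    then show ?thesis unfolding st by (auto dest!: comb_slots_parity)
  qed
qed

lemma row_breaks_tiling_of_rows:
  "row_breaks l (tiling_of_rows a l C0 C1) 0 = C0" "row_breaks l (tiling_of_rows a l C0 C1) 1 = C1"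
proof -
  have "{c\<in>tiling_of_rows a l C0 C1. fst c mod 2 = 0} = row_combs a l C0 0"
    "{c\<in>tiling_of_rows a l C0 C1. fst c mod 2 = 1} = row_combs a l C1 1"
    using tiling_of_rows_cases row_combs_parity unfolding tiling_of_rows_def by fastforce+
  moreover have "{x\<in>C0. x < l} \<union> {l} = C0" "{x\<in>C1. x < l} \<union> {l} = C1"
    using break_set_bounds[OF a C0] break_set_bounds[OF a C1] by auto
  ultimately show "row_breaks l (tiling_of_rows a l C0 C1) 0 = C0" "row_breaks l (tiling_of_rows a l C0 C1) 1 = C1"
    unfolding row_breaks_def using row_combs_starts[OF a C0, of 0] row_combs_starts[OF a C1, of 1] by simp_all
qed

end

context
  fixes a l :: nat and T :: "(nat \<times> nat) set"
  assumes a: "1 \<le> a" and T: "is_tiling a (a + 1) l T"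
begin

lemma tiling_slots: "(\<Union>c\<in>T. comb_slots c) = {..<2 * l}"
  using T unfolding is_tiling_def by (elim conjE)

lemma tiling_disjoint: "c \<in> T \<Longrightarrow> d \<in> T \<Longrightarrow> c \<noteq> d \<Longrightarrow> comb_slots c \<inter> comb_slots d = {}"
  using T unfolding is_tiling_def by (elim conjE) blast

lemma tiling_comb_length: "(s, t) \<in> T \<Longrightarrow> t = a \<or> t = a + 1"
  using T unfolding is_tiling_def by fastforce

lemma tiling_row_cover:
  assumes "x < l" "r < 2"
  shows "\<exists>s t. (s, t) \<in> T \<and> s mod 2 = r \<and> s div 2 \<le> x \<and> x < s div 2 + t"
proof -
  have "2 * x + r \<in> (\<Union>c\<in>T. comb_slots c)" unfolding tiling_slots using assms by simp
  then obtain s t where "(s, t) \<in> T" "2 * x + r \<in> comb_slots (s, t)" by auto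
  then show ?thesis using assms(2) unfolding comb_slots_iff by auto
qed

lemma tiling_row_unique:
  assumes "(s, t) \<in> T" "s div 2 \<le> x" "x < s div 2 + t"
    and "(s', t') \<in> T" "s' div 2 \<le> x" "x < s' div 2 + t'" and "s mod 2 = s' mod 2"
  shows "s = s' \<and> t = t'"
proof -
  have "2 * x + s mod 2 \<in> comb_slots (s, t) \<inter> comb_slots (s', t')"
    using comb_slot_at[of s x t] comb_slot_at[of s' x t'] assms by simp
  then show ?thesis using tiling_disjoint[OF assms(1,4)] by blast
qed

lemma tiling_comb_end_le:
  assumes "(s, t) \<in> T"
  shows "s div 2 + t \<le> l"
proof -
  have "0 < t" using tiling_comb_length[OF assms] a by auto
  then have "2 * (s div 2 + t - 1) + s mod 2 \<in> comb_slots (s, t)"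
    using comb_slot_at[of s "s div 2 + t - 1" t] by simp
  then have "2 * (s div 2 + t - 1) + s mod 2 < 2 * l" using tiling_slots assms by blast
  then show ?thesis by linarith
qed

lemma comb_start_row_break: "(s, t) \<in> T \<Longrightarrow> s div 2 \<in> row_breaks l T (s mod 2)"
  unfolding row_breaks_def by force

lemma row_break_comb:
  assumes "x \<in> row_breaks l T r" "x < l" "r < 2"
  shows "\<exists>t. (2 * x + r, t) \<in> T"
proof -
  obtain s t where st: "(s, t) \<in> T" "s mod 2 = r" "x = s div 2"
    using assms(1,2) unfolding row_breaks_def by auto
  then have "s = 2 * x + r" using mult_div_mod_eq[of 2 s] by simp
  then show ?thesis using st(1) by blast
qed

lemma comb_interior_not_row_break:
  assumes st: "(s, t) \<in> T" and y: "s div 2 < y" "y < s div 2 + t"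
  shows "y \<notin> row_breaks l T (s mod 2)"
proof
  assume "y \<in> row_breaks l T (s mod 2)"
  moreover have "y < l" using tiling_comb_end_le[OF st] y by simp
  ultimately obtain t' where "(2 * y + s mod 2, t') \<in> T"
    using row_break_comb[of y "s mod 2"] by auto
  then have "s = 2 * y + s mod 2"
    using tiling_row_unique[OF st _ y(2), of "2 * y + s mod 2" t'] y(1) tiling_comb_length a by force
  then show False using y(1) by simp
qed

lemma comb_end_row_break:
  assumes st: "(s, t) \<in> T"
  shows "s div 2 + t \<in> row_breaks l T (s mod 2)"
proof (cases "s div 2 + t < l")
  case True
  then obtain s' t' where c': "(s', t') \<in> T" "s' mod 2 = s mod 2"
    "s' div 2 \<le> s div 2 + t" "s div 2 + t < s' div 2 + t'"
    using tiling_row_cover[of "s div 2 + t" "s mod 2"] by auto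
  have "\<not> s' div 2 < s div 2 + t"
  proof
    assume "s' div 2 < s div 2 + t"
    then have "s = s' \<and> t = t'" using tiling_row_unique[OF st _ _ c'(1), of "s div 2 + t - 1"] c'
      tiling_comb_length[OF st] a by auto
    then show False using c'(4) by simp
  qed
  then show ?thesis using comb_start_row_break[OF c'(1)] c'(2,3) by simp
next
  case False
  then show ?thesis using tiling_comb_end_le[OF st] unfolding row_breaks_def by simp
qed

lemma is_break_set_row_breaks:
  assumes r: "r < 2"
  shows "is_break_set a l (row_breaks l T r)"
  unfolding is_break_set_def
proof (intro conjI ballI impI allI)
  show "row_breaks l T r \<subseteq> {0..l}"
    unfolding row_breaks_def using tiling_comb_end_le by fastforce
  show "l \<in> row_breaks l T r" unfolding row_breaks_def by simp
  show "0 \<in> row_breaks l T r"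
  proof (cases "l = 0")
    case False
    then obtain s t where "(s, t) \<in> T" "s mod 2 = r" "s div 2 = 0"
      using tiling_row_cover[OF _ r, of 0] by auto
    then show ?thesis using comb_start_row_break by metis
  qed (simp add: row_breaks_def)
  fix x assume x: "x \<in> row_breaks l T r" "x < l"
  then obtain t where st: "(2 * x + r, t) \<in> T" using row_break_comb r by blast
  have "x + t \<in> row_breaks l T r" using comb_end_row_break[OF st] r by simp
  then show "x + a \<in> row_breaks l T r \<or> x + a + 1 \<in> row_breaks l T r"
    using tiling_comb_length[OF st] by auto
  fix y assume "x < y \<and> y < x + a"
  then show "y \<notin> row_breaks l T r"
    using comb_interior_not_row_break[OF st, of y] tiling_comb_length[OF st] r by auto
qed

lemma part_at_row_breaks:
  assumes st: "(2 * x + r, t) \<in> T" and r: "r < 2"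
  shows "part_at a (row_breaks l T r) x = t"
  using comb_end_row_break[OF st] comb_interior_not_row_break[OF st, of "x + a"]
    tiling_comb_length[OF st] a r unfolding part_at_def by auto

lemma tiling_of_rows_row_breaks: "tiling_of_rows a l (row_breaks l T 0) (row_breaks l T 1) = T"
proof (intro equalityI subsetI)
  have rows: "row_combs a l (row_breaks l T r) r \<subseteq> T" if r: "r < 2" for r
  proof
    fix c assume "c \<in> row_combs a l (row_breaks l T r) r"
    then obtain x where x: "x \<in> row_breaks l T r" "x < l" "c = (2 * x + r, part_at a (row_breaks l T r) x)"
      unfolding row_combs_def by auto
    then obtain t where "(2 * x + r, t) \<in> T" using row_break_comb r by blast
    then show "c \<in> T" using part_at_row_breaks r x(3) by simp
  qed
  then have "tiling_of_rows a l (row_breaks l T 0) (row_breaks l T 1) \<subseteq> T"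
    unfolding tiling_of_rows_def by simp
  then show "c \<in> T" if "c \<in> tiling_of_rows a l (row_breaks l T 0) (row_breaks l T 1)" for c
    using that by blast
next
  fix c assume c: "c \<in> T"
  obtain x r t where st: "c = (2 * x + r, t)" "r < 2"
    by (metis mult_div_mod_eq prod.collapse mod_less_divisor zero_less_numeral)
  have "x \<in> row_breaks l T r" "x < l" "part_at a (row_breaks l T r) x = t"
    using comb_start_row_break[of "2 * x + r" t] tiling_comb_end_le[of "2 * x + r" t]
      part_at_row_breaks[of x r t] tiling_comb_length[of "2 * x + r" t] c st a by auto
  then show "c \<in> tiling_of_rows a l (row_breaks l T 0) (row_breaks l T 1)"
    using st less_2_cases[OF st(2)] unfolding tiling_of_rows_def row_combs_def by auto
qed

lemma cut_point_iff_common_row_break: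
  "is_cut_point l T x \<longleftrightarrow> 0 < x \<and> x < l \<and> x \<in> row_breaks l T 0 \<and> x \<in> row_breaks l T 1"
proof
  assume cut: "is_cut_point l T x"
  then have x: "0 < x" "x < l" unfolding is_cut_point_def by auto
  have "x \<in> row_breaks l T r" if r: "r < 2" for r
  proof -
    obtain s t where st: "(s, t) \<in> T" "s mod 2 = r" "s div 2 \<le> x" "x < s div 2 + t"
      using tiling_row_cover[OF x(2) r] by auto
    have "2 * x + r \<in> comb_slots (s, t)" "2 * (s div 2) + r \<in> comb_slots (s, t)"
      using st comb_slot_at[of s _ t] by auto
    then have "2 * x \<le> 2 * (s div 2) + r"
      using cut st(1) unfolding is_cut_point_def by fastforce
    then have "s div 2 = x" using st(3) r by linarith
    then show ?thesis using comb_start_row_break[OF st(1)] st(2) by simp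
  qed
  then show "0 < x \<and> x < l \<and> x \<in> row_breaks l T 0 \<and> x \<in> row_breaks l T 1" using x by simp
next
  assume x: "0 < x \<and> x < l \<and> x \<in> row_breaks l T 0 \<and> x \<in> row_breaks l T 1"
  have "comb_slots (s, t) \<subseteq> {..<2 * x} \<or> comb_slots (s, t) \<subseteq> {2 * x..}" if st: "(s, t) \<in> T" for s t
  proof (cases "x \<le> s div 2")
    case True
    have "2 * x \<le> y" if "y \<in> comb_slots (s, t)" for y
      using that True mult_div_mod_eq[of 2 y] unfolding comb_slots_iff by linarith
    then show ?thesis by auto
  next
    case False
    have "x \<in> row_breaks l T (s mod 2)" using x by (cases "s mod 2 = 0") auto
    then have "\<not> x < s div 2 + t" using comb_interior_not_row_break[OF st, of x] False by auto
    then have "y < 2 * x" if "y \<in> comb_slots (s, t)" for y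
      using that mult_div_mod_eq[of 2 y] unfolding comb_slots_iff by linarith
    then show ?thesis by auto
  qed
  then show "is_cut_point l T x" unfolding is_cut_point_def using x by auto
qed

end

section \<open>Metatiles as pairs of compositions without common break\<close>

definition no_common_break :: "nat \<Rightarrow> nat set \<Rightarrow> nat set \<Rightarrow> bool" where
  "no_common_break l C D \<longleftrightarrow> C \<inter> D \<inter> {0<..<l} = {}"

lemma no_common_breakD: "no_common_break l C D \<Longrightarrow> x \<in> C \<Longrightarrow> x \<in> D \<Longrightarrow> 0 < x \<Longrightarrow> x < l \<Longrightarrow> False"
  unfolding no_common_break_def by auto

lemma no_common_break_commute: "no_common_break l C D \<longleftrightarrow> no_common_break l D C"
  unfolding no_common_break_def by (simp add: Int_commute)

lemma no_cut_point_iff: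
  assumes "1 \<le> a" "is_tiling a (a + 1) l T"
  shows "(\<forall>x. \<not> is_cut_point l T x) \<longleftrightarrow> no_common_break l (row_breaks l T 0) (row_breaks l T 1)"
  unfolding no_common_break_def cut_point_iff_common_row_break[OF assms] by auto

lemma tiling_without_cut_point_is_mixed:
  assumes a: "1 \<le> a" and l: "2 * a + 1 \<le> l" and T: "is_tiling a (a + 1) l T"
    and no_cut: "\<forall>x. \<not> is_cut_point l T x"
  shows "is_mixed T"
proof (rule ccontr)
  assume "\<not> is_mixed T"
  have "0 \<in> row_breaks l T r" if "r < 2" for r
    using break_set_bounds(2)[OF a is_break_set_row_breaks[OF a T that]] .
  then obtain t0 t1 where t0: "(0, t0) \<in> T" and t1: "(1, t1) \<in> T"
    using row_break_comb[OF a T, of 0 0] row_break_comb[OF a T, of 0 1] l by auto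
  have "t0 = t1" using \<open>\<not> is_mixed T\<close> t0 t1 unfolding is_mixed_def by fastforce
  then have "t0 \<in> row_breaks l T 0" "t0 \<in> row_breaks l T 1"
    using comb_end_row_break[OF a T t0] comb_end_row_break[OF a T t1] by simp_all
  moreover have "0 < t0" "t0 < l" using tiling_comb_length[OF a T t0] a l by auto
  moreover have "no_common_break l (row_breaks l T 0) (row_breaks l T 1)"
    using no_cut no_cut_point_iff[OF a T] by simp
  ultimately show False using no_common_breakD by metis
qed

theorem card_mixed_metatiles:
  assumes a: "1 \<le> a" and l: "2 * a + 1 \<le> l"
  shows "card {T. is_metatile a (a + 1) l T \<and> is_mixed T} =
    card {(C0, C1). is_break_set a l C0 \<and> is_break_set a l C1 \<and> no_common_break l C0 C1}"
proof -
  let ?M = "{T. is_metatile a (a + 1) l T \<and> is_mixed T}"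
  let ?Q = "{(C0, C1). is_break_set a l C0 \<and> is_break_set a l C1 \<and> no_common_break l C0 C1}"
  have "bij_betw (\<lambda>T. (row_breaks l T 0, row_breaks l T 1)) ?M ?Q"
  proof (rule bij_betw_byWitness[where f' = "\<lambda>(C0, C1). tiling_of_rows a l C0 C1"])
    show "\<forall>T\<in>?M. (\<lambda>(C0, C1). tiling_of_rows a l C0 C1) (row_breaks l T 0, row_breaks l T 1) = T"
      using tiling_of_rows_row_breaks[OF a] unfolding is_metatile_def by auto
    show "\<forall>Q\<in>?Q. (\<lambda>T. (row_breaks l T 0, row_breaks l T 1)) ((\<lambda>(C0, C1). tiling_of_rows a l C0 C1) Q) = Q"
      using row_breaks_tiling_of_rows[OF a] by auto
    show "(\<lambda>T. (row_breaks l T 0, row_breaks l T 1)) ` ?M \<subseteq> ?Q"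
      using is_break_set_row_breaks[OF a] no_cut_point_iff[OF a] unfolding is_metatile_def by auto
    show "(\<lambda>(C0, C1). tiling_of_rows a l C0 C1) ` ?Q \<subseteq> ?M"
    proof clarify
      fix C0 C1 assume C: "is_break_set a l C0" "is_break_set a l C1" "no_common_break l C0 C1"
      let ?T = "tiling_of_rows a l C0 C1"
      have T: "is_tiling a (a + 1) l ?T" using is_tiling_tiling_of_rows[OF a C(1,2)] .
      then have "\<forall>x. \<not> is_cut_point l ?T x"
        using no_cut_point_iff[OF a] row_breaks_tiling_of_rows[OF a C(1,2)] C(3) by simp
      then show "is_metatile a (a + 1) l ?T \<and> is_mixed ?T"
        using T tiling_without_cut_point_is_mixed[OF a l T] unfolding is_metatile_def by simp
    qed
  qed
  then show ?thesis by (rule bij_betw_same_card)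
qed

section \<open>Pairs of compositions as alternating break sets\<close>

definition merged_breaks :: "nat \<Rightarrow> nat set \<Rightarrow> nat set \<Rightarrow> nat set" where
  "merged_breaks l C D = (C \<union> D) - {0, l}"

lemma mem_merged_breaks: "x \<in> merged_breaks l C D \<longleftrightarrow> (x \<in> C \<or> x \<in> D) \<and> x \<noteq> 0 \<and> x \<noteq> l"
  unfolding merged_breaks_def by auto

lemma merged_breaks_commute: "merged_breaks l C D = merged_breaks l D C"
  unfolding merged_breaks_def by (simp add: Un_commute)

locale break_set_pair =
  fixes a l :: nat and C D :: "nat set"
  assumes a: "1 \<le> a" and l: "2 * a + 1 \<le> l"
    and C: "is_break_set a l C" and D: "is_break_set a l D" and CD: "no_common_break l C D"
begin

lemma merged_breaks_bounds: "merged_breaks l C D \<subseteq> {a..l - a}"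
  unfolding merged_breaks_def using break_set_interior_bounds[OF a C] break_set_interior_bounds[OF a D]
    break_set_bounds(1)[OF a C] break_set_bounds(1)[OF a D] by fastforce

lemma first_breaks: "a \<in> C \<and> a + 1 \<in> D \<or> a \<in> D \<and> a + 1 \<in> C"
proof -
  have "0 < l" using l by simp
  then have "part_at a C 0 \<in> C" "part_at a D 0 \<in> D"
    using break_set_next(1)[OF a C break_set_bounds(2)[OF a C]]
      break_set_next(1)[OF a D break_set_bounds(2)[OF a D]] by simp_all
  moreover have "0 < part_at a C 0" "part_at a C 0 < l"
    using part_at_cases[of a C 0] a l by auto
  ultimately have "part_at a C 0 \<noteq> part_at a D 0" using no_common_breakD[OF CD] by metis
  then show ?thesis using \<open>part_at a C 0 \<in> C\<close> \<open>part_at a D 0 \<in> D\<close> unfolding part_at_def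
    by (auto split: if_splits)
qed

lemma last_breaks: "l - a - 1 \<in> merged_breaks l C D" "l - a \<in> merged_breaks l C D"
proof -
  have "0 < l" using l by simp
  obtain x where x: "x \<in> C" "x < l" "x + part_at a C x = l"
    using break_set_pred[OF a C break_set_bounds(3)[OF a C] \<open>0 < l\<close>] by blast
  obtain y where y: "y \<in> D" "y < l" "y + part_at a D y = l"
    using break_set_pred[OF a D break_set_bounds(3)[OF a D] \<open>0 < l\<close>] by blast
  have "x = l - a \<or> x = l - a - 1" "y = l - a \<or> y = l - a - 1"
    using x(3) y(3) part_at_cases[of a C x] part_at_cases[of a D y] by auto
  moreover then have "0 < x" "0 < y" using a l by auto
  moreover then have "x \<noteq> y" using no_common_breakD[OF CD x(1)] y(1) x(2) by auto
  ultimately show "l - a - 1 \<in> merged_breaks l C D" "l - a \<in> merged_breaks l C D"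
    using x(1,2) y(1,2) unfolding mem_merged_breaks by auto
qed

text \<open>Between two consecutive breaks of one composition lies exactly one break of the other:
  two breaks of the other one would be at least a apart, and none at all would give a part of
  length more than a + 1 or a common break.\<close>
lemma rank_next_break:
  assumes x: "x \<in> C" "0 < x" and y: "y = x + part_at a C x" "y < l"
  shows "rank_in (merged_breaks l C D) y = rank_in (merged_breaks l C D) x + 2"
proof -
  let ?Z = "merged_breaks l C D"
  have xl: "x < l" using y by simp
  have yC: "y \<in> C" using break_set_next(1)[OF a C x(1) xl] y(1) by simp
  have "x \<notin> D" using no_common_breakD[OF CD x(1)] x(2) xl by blast
  obtain p where p: "p \<in> D" "p \<le> x" "x < p + part_at a D p"
    using break_set_cover[OF a D xl] by blast
  define w where "w = p + part_at a D p"
  have pl: "p < l" using p(2) xl by simp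
  have wD: "w \<in> D" using break_set_next(1)[OF a D p(1) pl] unfolding w_def .
  have "p < x" using p(1,2) \<open>x \<notin> D\<close> by (cases "p = x") auto
  then have "w \<le> y" using part_at_cases[of a D p] part_at_cases[of a C x] y(1) unfolding w_def by auto
  moreover have "w \<noteq> y" using no_common_breakD[OF CD yC] wD y x(2) by auto
  ultimately have wy: "x < w" "w < y" using p(3) unfolding w_def by simp_all
  have "{v\<in>?Z. x < v \<and> v \<le> y} = {w, y}"
  proof (intro equalityI subsetI)
    fix v assume v: "v \<in> {v\<in>?Z. x < v \<and> v \<le> y}"
    show "v \<in> {w, y}"
    proof (rule ccontr)
      assume "v \<notin> {w, y}"
      then have "v \<notin> C" using break_set_next(2)[OF a C x(1) xl, of v] v y(1) by auto
      then have "v \<in> D" using v by (simp add: mem_merged_breaks)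
      then have "v + a \<le> w \<or> w + a \<le> v"
        using break_set_sep[OF a D _ wD] break_set_sep[OF a D wD] \<open>v \<notin> {w, y}\<close> by (cases "v < w") auto
      then show False using v wy y(1) part_at_cases[of a C x] \<open>v \<notin> {w, y}\<close> by auto
    qed
  qed (use wD wy x(2) y yC in \<open>auto simp: mem_merged_breaks\<close>)
  moreover have "w \<noteq> y" using wy by simp
  ultimately have "card {v\<in>?Z. x < v \<and> v \<le> y} = 2" by simp
  moreover have "finite ?Z"
    using finite_break_set[OF a C] finite_break_set[OF a D] unfolding merged_breaks_def by simp
  ultimately show ?thesis using rank_in_split[of ?Z x y] y(1) by simp
qed

lemma merged_breaks_step:
  assumes x: "x \<in> C" "x \<in> merged_breaks l C D" "x < l - a - 1"
  shows "\<exists>y\<in>merged_breaks l C D. (y = x + a \<or> y = x + a + 1) \<and>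
    rank_in (merged_breaks l C D) y = rank_in (merged_breaks l C D) x + 2"
proof -
  define y where "y = x + part_at a C x"
  have "0 < x" "y < l" using x part_at_cases[of a C x] unfolding mem_merged_breaks y_def by auto
  moreover then have "y \<in> merged_breaks l C D"
    using break_set_next(1)[OF a C x(1)] unfolding mem_merged_breaks y_def by simp
  ultimately show ?thesis
    using rank_next_break[OF x(1) _ y_def] part_at_cases[of a C x] unfolding y_def by auto
qed

lemma swap: "break_set_pair a l D C"
  using a l C D CD by unfold_locales (simp_all add: no_common_break_commute)

lemma alternating_merged_breaks: "alternating_breaks a a (l - a) (merged_breaks l C D)"
  unfolding alternating_breaks_def
proof (intro conjI ballI impI)
  show "merged_breaks l C D \<subseteq> {a..l - a}" by (rule merged_breaks_bounds)
  show "a \<in> merged_breaks l C D" "a + 1 \<in> merged_breaks l C D"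
    using first_breaks a l unfolding mem_merged_breaks by auto
  show "l - a - 1 \<in> merged_breaks l C D" "l - a \<in> merged_breaks l C D" by (fact last_breaks)+
  fix x assume x: "x \<in> merged_breaks l C D" "x < l - a - 1"
  then consider "x \<in> C" | "x \<in> D" unfolding mem_merged_breaks by blast
  then show "\<exists>y\<in>merged_breaks l C D. (y = x + a \<or> y = x + a + 1) \<and>
      rank_in (merged_breaks l C D) y = rank_in (merged_breaks l C D) x + 2"
  proof cases
    case 1
    then show ?thesis using merged_breaks_step x by blast
  next
    case 2
    then show ?thesis using break_set_pair.merged_breaks_step[OF swap] x merged_breaks_commute by metis
  qed
qed

lemma rank_parity:
  assumes "z \<in> C" "z \<in> merged_breaks l C D"
  shows "even (rank_in (merged_breaks l C D) z) \<longleftrightarrow> a + 1 \<in> C"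
  using assms
proof (induction z rule: less_induct)
  case (less z)
  let ?Z = "merged_breaks l C D"
  have z: "0 < z" "z < l" using less.prems merged_breaks_bounds a l by fastforce+
  obtain p where p: "p \<in> C" "p < z" "p + part_at a C p = z"
    using break_set_pred[OF a C less.prems(1) z(1)] by blast
  show ?case
  proof (cases "p = 0")
    case True
    have ranks: "rank_in ?Z a = 1" "rank_in ?Z (a + 1) = 2"
      using alternating_breaks_first_ranks[OF alternating_merged_breaks] by simp_all
    have "a + 1 \<notin> C" if "a \<in> C"
      using first_breaks that no_common_breakD[OF CD, of a] no_common_breakD[OF CD, of "a + 1"] a l by auto
    then show ?thesis using less.prems(1) p(3) True ranks unfolding part_at_def by (auto split: if_splits)
  next
    case False
    then have "p \<in> ?Z" using p z unfolding mem_merged_breaks by simp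
    then have "even (rank_in ?Z p) \<longleftrightarrow> a + 1 \<in> C" using less.IH[OF p(2) p(1)] by blast
    moreover have "rank_in ?Z z = rank_in ?Z p + 2" using rank_next_break[OF p(1)] False p(3) z(2) by simp
    ultimately show ?thesis by simp
  qed
qed

end

definition row_of_breaks :: "nat \<Rightarrow> nat set \<Rightarrow> bool \<Rightarrow> nat set" where
  "row_of_breaks l Z b = {0, l} \<union> {z\<in>Z. even (rank_in Z z) = b}"

lemma (in break_set_pair) row_of_merged_breaks: "row_of_breaks l (merged_breaks l C D) (a + 1 \<in> C) = C"
proof -
  have "a + 1 \<in> D \<longleftrightarrow> a + 1 \<notin> C"
    using first_breaks no_common_breakD[OF CD, of "a + 1"] a l by auto
  then have "z \<in> C" if "z \<in> merged_breaks l C D" "even (rank_in (merged_breaks l C D) z) = (a + 1 \<in> C)" for z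
    using that break_set_pair.rank_parity[OF swap, of z] merged_breaks_commute[of l C D]
    unfolding mem_merged_breaks by auto
  then show ?thesis
    using rank_parity break_set_bounds(2,3)[OF a C] unfolding row_of_breaks_def mem_merged_breaks by auto
qed

context
  fixes a l :: nat and Z :: "nat set"
  assumes a: "1 \<le> a" and l: "2 * a + 1 \<le> l" and Z: "alternating_breaks a a (l - a) Z"
begin

lemma mem_row_of_breaks:
  "v \<in> row_of_breaks l Z b \<longleftrightarrow> v = 0 \<or> v = l \<or> v \<in> Z \<and> even (rank_in Z v) = b"
  unfolding row_of_breaks_def by auto

lemma alternating_breaks_interior: "v \<in> Z \<Longrightarrow> 0 < v" "v \<in> Z \<Longrightarrow> v < l"
  using alternating_breaks_bounds(1)[OF Z] a l by fastforce+

lemma row_of_breaks_first_step: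
  "\<exists>y. (y = a \<or> y = a + 1) \<and> y \<in> row_of_breaks l Z b \<and> (\<forall>v. 0 < v \<and> v < y \<longrightarrow> v \<notin> row_of_breaks l Z b)"
proof -
  define y where "y = (if even (rank_in Z a) = b then a else a + 1)"
  have ranks: "rank_in Z a = 1" "rank_in Z (a + 1) = 2"
    using alternating_breaks_first_ranks[OF Z] by simp_all
  have "y \<in> row_of_breaks l Z b"
    using ranks alternating_breaks_bounds(2,3)[OF Z] unfolding y_def mem_row_of_breaks by auto
  moreover have "v \<notin> row_of_breaks l Z b" if v: "0 < v" "v < y" for v
  proof
    assume "v \<in> row_of_breaks l Z b"
    moreover have "v < l" using v(2) l unfolding y_def by (auto split: if_splits)
    ultimately have "v \<in> Z" "even (rank_in Z v) = b" using v(1) unfolding mem_row_of_breaks by auto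
    moreover then have "v = a"
      using alternating_breaks_bounds(1)[OF Z] v(2) unfolding y_def by (auto split: if_splits)
    ultimately show False using v(2) unfolding y_def by (auto split: if_splits)
  qed
  moreover have "y = a \<or> y = a + 1" unfolding y_def by simp
  ultimately show ?thesis by (intro exI[of _ y]) simp
qed

lemma row_of_breaks_inner_step:
  assumes x: "x \<in> Z" "even (rank_in Z x) = b" "x < l - a - 1"
  shows "second_succ Z x \<in> row_of_breaks l Z b"
    "x < v \<Longrightarrow> v < second_succ Z x \<Longrightarrow> v \<notin> row_of_breaks l Z b"
proof -
  have y: "second_succ Z x \<in> Z" "rank_in Z (second_succ Z x) = rank_in Z x + 2"
    using alternating_breaks_second_succ[OF Z x(1)] x(3) by simp_all
  then show "second_succ Z x \<in> row_of_breaks l Z b" using x(2) unfolding mem_row_of_breaks by simp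
  assume "x < v" "v < second_succ Z x"
  then show "v \<notin> row_of_breaks l Z b"
    using rank_in_between[OF alternating_breaks_finite[OF Z] _ y(1) _ _ y(2)]
      alternating_breaks_interior(2)[OF y(1)] x(2) unfolding mem_row_of_breaks by auto
qed

lemma row_of_breaks_last_step:
  assumes x: "x \<in> Z" "even (rank_in Z x) = b" "l - a - 1 \<le> x" and v: "x < v" "v < l"
  shows "v \<notin> row_of_breaks l Z b"
proof
  assume "v \<in> row_of_breaks l Z b"
  then have vZ: "v \<in> Z" "even (rank_in Z v) = b" using v x unfolding mem_row_of_breaks by auto
  then have "v \<le> l - a" using alternating_breaks_bounds(1)[OF Z] by auto
  then have "{w\<in>Z. x < w \<and> w \<le> v} = {v}" using v(1) x(3) vZ(1) by auto
  then have "rank_in Z v = rank_in Z x + 1"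
    using rank_in_split[OF alternating_breaks_finite[OF Z], of x v] v(1) by simp
  then show False using vZ(2) x(2) by simp
qed

lemma row_of_breaks_step:
  assumes x: "x \<in> row_of_breaks l Z b" "x < l"
  shows "\<exists>y. (y = x + a \<or> y = x + a + 1) \<and> y \<in> row_of_breaks l Z b \<and>
    (\<forall>v. x < v \<and> v < y \<longrightarrow> v \<notin> row_of_breaks l Z b)"
proof -
  consider "x = 0" | "x \<in> Z" "even (rank_in Z x) = b" "x < l - a - 1"
    | "x \<in> Z" "even (rank_in Z x) = b" "l - a - 1 \<le> x"
    using x unfolding mem_row_of_breaks by linarith
  then show ?thesis
  proof cases
    case 1
    then show ?thesis using row_of_breaks_first_step by simp
  next
    case 2
    then show ?thesis
      using row_of_breaks_inner_step alternating_breaks_second_succ(2)[OF Z 2(1)] by blast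
  next
    case 3
    then have "l = x + a \<or> l = x + a + 1" using alternating_breaks_bounds(1)[OF Z] l by fastforce
    then show ?thesis using row_of_breaks_last_step[OF 3] unfolding mem_row_of_breaks by auto
  qed
qed

lemma is_break_set_row_of_breaks: "is_break_set a l (row_of_breaks l Z b)"
  unfolding is_break_set_def
proof (intro conjI ballI impI allI)
  show "row_of_breaks l Z b \<subseteq> {0..l}" "0 \<in> row_of_breaks l Z b" "l \<in> row_of_breaks l Z b"
    using alternating_breaks_interior(2) unfolding row_of_breaks_def by (auto simp: less_imp_le)
  fix x assume "x \<in> row_of_breaks l Z b" "x < l"
  then obtain y where y: "y = x + a \<or> y = x + a + 1" "y \<in> row_of_breaks l Z b"
    "\<forall>v. x < v \<and> v < y \<longrightarrow> v \<notin> row_of_breaks l Z b"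
    using row_of_breaks_step by blast
  then show "x + a \<in> row_of_breaks l Z b \<or> x + a + 1 \<in> row_of_breaks l Z b" by auto
  fix v assume "x < v \<and> v < x + a"
  then show "v \<notin> row_of_breaks l Z b" using y by auto
qed

lemma no_common_break_rows: "no_common_break l (row_of_breaks l Z b) (row_of_breaks l Z (\<not> b))"
  unfolding no_common_break_def row_of_breaks_def by auto

lemma merged_rows: "merged_breaks l (row_of_breaks l Z b) (row_of_breaks l Z (\<not> b)) = Z"
  using alternating_breaks_interior unfolding merged_breaks_def row_of_breaks_def by auto

lemma second_break_in_row: "a + 1 \<in> row_of_breaks l Z b \<longleftrightarrow> b"
  using alternating_breaks_first_ranks[OF Z] alternating_breaks_bounds(3)[OF Z] alternating_breaks_interior
  unfolding mem_row_of_breaks by auto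

end

theorem card_break_set_pairs:
  assumes a: "1 \<le> a" and l: "2 * a + 1 \<le> l"
  shows "card {(C0, C1). is_break_set a l C0 \<and> is_break_set a l C1 \<and> no_common_break l C0 C1} =
    2 * card {Z. alternating_breaks a a (l - a) Z}"
proof -
  let ?Q = "{(C0, C1). is_break_set a l C0 \<and> is_break_set a l C1 \<and> no_common_break l C0 C1}"
  let ?G = "{Z. alternating_breaks a a (l - a) Z} \<times> (UNIV :: bool set)"
  let ?f = "\<lambda>(C0, C1). (merged_breaks l C0 C1, a + 1 \<in> C0)"
  let ?g = "\<lambda>(Z, b). (row_of_breaks l Z b, row_of_breaks l Z (\<not> b))"
  have "bij_betw ?f ?Q ?G"
  proof (rule bij_betw_byWitness[where f' = ?g])
    show "\<forall>Q\<in>?Q. ?g (?f Q) = Q"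
    proof
      fix Q assume "Q \<in> ?Q"
      then obtain C0 C1 where Q: "Q = (C0, C1)"
        and C: "is_break_set a l C0" "is_break_set a l C1" "no_common_break l C0 C1" by auto
      interpret break_set_pair a l C0 C1 using a l C by unfold_locales
      have "a + 1 \<notin> C0 \<longleftrightarrow> a + 1 \<in> C1"
        using first_breaks no_common_breakD[OF CD, of "a + 1"] a l by auto
      then show "?g (?f Q) = Q"
        using row_of_merged_breaks break_set_pair.row_of_merged_breaks[OF swap] merged_breaks_commute Q
        by simp
    qed
    show "\<forall>G\<in>?G. ?f (?g G) = G"
      using merged_rows[OF a l] second_break_in_row[OF a l] by auto
    show "?f ` ?Q \<subseteq> ?G"
      using break_set_pair.alternating_merged_breaks a l unfolding break_set_pair_def by auto
    show "?g ` ?G \<subseteq> ?Q"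
      using is_break_set_row_of_breaks[OF a l] no_common_break_rows[OF a l] by auto
  qed
  then have "card ?Q = card ?G" by (rule bij_betw_same_card)
  also have "\<dots> = 2 * card {Z. alternating_breaks a a (l - a) Z}"
    by (simp add: card_cartesian_product)
  finally show ?thesis .
qed

theorem theorem4:
  fixes m l :: nat
  assumes "l \<ge> 2 * m + 3"
  shows "mu (m + 1) (m + 2) l = 2 * P (l - 2 * m - 3) {-2, int m - 1, int m}"
proof -
  define n where "n = l - 2 * m - 3"
  have a: "1 \<le> m + 1" and l: "2 * (m + 1) + 1 \<le> l" using assms by simp_all
  have "mu (m + 1) (m + 2) l = card {T. is_metatile (m + 1) (m + 1 + 1) l T \<and> is_mixed T}"
    unfolding mu_def by simp
  also have "\<dots> = 2 * card {Z. alternating_breaks (m + 1) (m + 1) (l - (m + 1)) Z}"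
    using card_mixed_metatiles[OF a l] card_break_set_pairs[OF a l] by simp
  also have "l - (m + 1) = m + (n + 2)" using assms unfolding n_def by simp
  also have "card {Z. alternating_breaks (m + 1) (m + 1) (m + (n + 2)) Z} =
      card {Z. alternating_breaks (m + 1) 1 (n + 2) Z}"
    using card_alternating_breaks_shift[of "n + 2" "m + 1" m 1] by simp
  also have "\<dots> = P n {-2, int m - 1, int m}" by (rule P_eq_card_alternating_breaks[symmetric])
  finally show ?thesis unfolding n_def .
qed

end
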